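(* Let $m$ be a monad and $r$ any type, and let $R = m\ r$. Let $\mathrm{ThrowT}\ r\ m\ e\ a$ be the type $(\forall b.\ e \to \mathrm{Cont}\ R\ b) \to \mathrm{Cont}\ R\ a$, with operations (writing $\mathrm{run}$ for application to the handler argument): $\mathrm{return}\ a = \lambda h.\ \mathrm{pure}_{\mathrm{Cont}}\ a$; $\ (x \gg\!= k) = \lambda h.\ x\ h \gg\!=_{\mathrm{Cont}} (\lambda a.\ k\ a\ h)$; $\mathrm{throwT}\ e = \lambda h.\ h\ e$; $\mathrm{catchT}\ x\ k = \lambda \mathit{outer}.\ \mathrm{callCC}\ (\lambda \mathit{normalExit}.\ \mathrm{callCCR2}\ (\lambda \mathit{newThrow}.\ x\ \mathit{newThrow} \gg\!=_{\mathrm{Cont}} \mathit{normalExit}) \gg\!=_{\mathrm{Cont}} (\lambda e.\ k\ e\ \mathit{outer}))$, where $\mathrm{catchT} : \mathrm{ThrowT}\ r\ m\ e\ a \to (e \to \mathrm{ThrowT}\ r\ m\ f\ a) \to \mathrm{ThrowT}\ r\ m\ f\ a$. Let likewise $\mathrm{ThrowT}'\ m\ e\ a = \forall r.\ (\forall b.\ e \to \mathrm{Cont}\ (m\ r)\ b) \to \mathrm{Cont}\ (m\ r)\ a$ with the same defining bodies for all four operations. Then both $\mathrm{ThrowT}\ r\ m$ and $\mathrm{ThrowT}'\ m$ are conjoinedly monadic error algebras (with $(\mathrm{return}, \gg\!=)$ in the value index and $(\mathrm{throwT}, \mathrm{catchT})$ in the error index).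
   Context: $\mathrm{Cont}\ R\ a = (a \to R) \to R$, with $\mathrm{pure}_{\mathrm{Cont}}\ a = \lambda c.\ c\ a$ and $(x \gg\!=_{\mathrm{Cont}} f) = \lambda c.\ x\ (\lambda a.\ f\ a\ c)$. $\mathrm{callCC} : ((a \to \mathrm{Cont}\ R\ b) \to \mathrm{Cont}\ R\ a) \to \mathrm{Cont}\ R\ a$ is $\mathrm{callCC}\ f = \lambda c.\ f\ (\lambda a.\ \lambda\_.\ c\ a)\ c$, and $\mathrm{callCCR2} : ((\forall b.\ a \to \mathrm{Cont}\ R\ b) \to \mathrm{Cont}\ R\ a) \to \mathrm{Cont}\ R\ a$ is the same term with this rank-2 type. Equality is extensional. A conjoinedly monadic error algebra is a type constructor $M$ of two type arguments (error index $e$, value index $a$) with operations $\mathrm{return} : a \to M\ e\ a$, $(\gg\!=) : M\ e\ a \to (a \to M\ e\ b) \to M\ e\ b$, $\mathrm{throw} : e \to M\ e\ a$, $\mathrm{catch} : M\ e\ a \to (e \to M\ f\ a) \to M\ f\ a$ such that: for every fixed $e$, $(\mathrm{return}, \gg\!=)$ satisfy the monad laws in $a$; for every fixed $a$, $(\mathrm{throw}, \mathrm{catch})$ satisfy the monad laws in $e$ ($\mathrm{catch}\ (\mathrm{throw}\ e)\ h = h\ e$, $\mathrm{catch}\ p\ \mathrm{throw} = p$, $\mathrm{catch}\ (\mathrm{catch}\ p\ g)\ h = \mathrm{catch}\ p\ (\lambda x.\ \mathrm{catch}\ (g\ x)\ h)$); and $\mathrm{catch}\ (\mathrm{return}\ x)\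 f = \mathrm{return}\ x$ and $\mathrm{throw}\ e \gg\!= f = \mathrm{throw}\ e$. *)

theory Defs
  imports Main
begin

(* Continuation monad Cont R a = (a => R) => R.  The answer type R = m r is an
   arbitrary type 'R (the monad structure of m is never used by the operations). *)
type_synonym ('R, 'a) cont = "('a \<Rightarrow> 'R) \<Rightarrow> 'R"

definition pureC :: "'a \<Rightarrow> ('R, 'a) cont" where
  "pureC a = (\<lambda>c. c a)"

definition bindC :: "('R, 'a) cont \<Rightarrow> ('a \<Rightarrow> ('R, 'b) cont) \<Rightarrow> ('R, 'b) cont" where
  "bindC x f = (\<lambda>c. x (\<lambda>a. f a c))"

definition callCC :: "(('a \<Rightarrow> ('R, 'b) cont) \<Rightarrow> ('R, 'a) cont) \<Rightarrow> ('R, 'a) cont" where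
  "callCC f = (\<lambda>c. f (\<lambda>a. \<lambda>_. c a) c)"

(* Rank-2 escape functions  (forall b. a -> Cont R b).  HOL has no rank-2 types;
   by parametricity every such polymorphic function p is of the form
   p a = (\<lambda>_. q a) for a unique q :: a => R, so we represent it by q.
   'esc q' is its instantiation at an arbitrary result type b. *)
type_synonym ('R, 'a) esc = "'a \<Rightarrow> 'R"

definition esc :: "('R, 'a) esc \<Rightarrow> 'a \<Rightarrow> ('R, 'b) cont" where
  "esc q a = (\<lambda>_. q a)"

(* callCCR2 f = \<lambda>c. f (\<lambda>a. \<lambda>_. c a) c, where the argument (\<lambda>a. \<lambda>_. c a)
   is the polymorphic escape represented by c. *)
definition callCCR2 :: "(('R, 'a) esc \<Rightarrow> ('R, 'a) cont) \<Rightarrow> ('R, 'a) cont" where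
  "callCCR2 f = (\<lambda>c. f c c)"

type_synonym ('R, 'e, 'a) throwT = "('R, 'e) esc \<Rightarrow> ('R, 'a) cont"

definition returnT :: "'a \<Rightarrow> ('R, 'e, 'a) throwT" where
  "returnT a = (\<lambda>h. pureC a)"

definition bindT :: "('R, 'e, 'a) throwT \<Rightarrow> ('a \<Rightarrow> ('R, 'e, 'b) throwT) \<Rightarrow> ('R, 'e, 'b) throwT" where
  "bindT x k = (\<lambda>h. bindC (x h) (\<lambda>a. k a h))"

definition throwT :: "'e \<Rightarrow> ('R, 'e, 'a) throwT" where
  "throwT e = (\<lambda>h. esc h e)"

definition catchT :: "('R, 'e, 'a) throwT \<Rightarrow> ('e \<Rightarrow> ('R, 'f, 'a) throwT) \<Rightarrow> ('R, 'f, 'a) throwT" where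
  "catchT x k = (\<lambda>outer. callCC (\<lambda>normalExit.
       bindC (callCCR2 (\<lambda>newThrow. bindC (x newThrow) normalExit)) (\<lambda>e. k e outer)))"

end

theory Submission
  imports Defs
begin

text \<open>A computation of type \<open>('R, 'e, 'a) throwT\<close> is a function of two continuations, an error
  continuation \<open>h :: 'e \<Rightarrow> 'R\<close> and a success continuation \<open>c :: 'a \<Rightarrow> 'R\<close>. Unfolding the
  control operators shows that \<open>bindT\<close> is the continuation monad acting on the success
  continuation, and \<open>catchT\<close> is the same continuation monad acting on the error continuation.
  Swapping the two continuations therefore exchanges \<open>(returnT, bindT)\<close> with
  \<open>(throwT, catchT)\<close>, so the error-index laws are the value-index laws read through the swap,
  and \<open>catchT (returnT x) f = returnT x\<close> is the dual of \<open>bindT (throwT e) f = throwT e\<close>.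
  Nothing depends on the answer type \<open>'R\<close>, so the argument covers the variant quantified
  over \<open>r\<close> as well.\<close>

definition flipT :: "('R, 'e, 'a) throwT \<Rightarrow> ('R, 'a, 'e) throwT" where
  "flipT p = (\<lambda>c h. p h c)"

lemma flipT_flipT [simp]: "flipT (flipT p) = p"
  by (simp add: flipT_def)

lemma returnT_apply: "returnT a h c = c a"
  by (simp add: returnT_def pureC_def)

lemma bindT_apply: "bindT x k h c = x h (\<lambda>a. k a h c)"
  by (simp add: bindT_def bindC_def)

lemma throwT_apply: "throwT e h c = h e"
  by (simp add: throwT_def esc_def)

lemma catchT_apply: "catchT x k h c = x (\<lambda>e. k e h c) c"
  by (simp add: catchT_def callCC_def callCCR2_def bindC_def)

lemma throwT_eq_flipT_returnT: "throwT e = flipT (returnT e)"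
  by (simp add: fun_eq_iff flipT_def returnT_apply throwT_apply)

lemma catchT_eq_flipT_bindT: "catchT x k = flipT (bindT (flipT x) (flipT \<circ> k))"
  by (simp add: fun_eq_iff flipT_def bindT_apply catchT_apply)

lemma bindT_returnT_left: "bindT (returnT x) k = k x"
  by (simp add: fun_eq_iff bindT_apply returnT_apply)

lemma bindT_returnT_right: "bindT p returnT = p"
  by (simp add: fun_eq_iff bindT_apply returnT_apply)

lemma bindT_assoc: "bindT (bindT p f) g = bindT p (\<lambda>x. bindT (f x) g)"
  by (simp add: fun_eq_iff bindT_apply)

lemma bindT_throwT: "bindT (throwT e) f = throwT e"
  by (simp add: fun_eq_iff bindT_apply throwT_apply)

lemma catchT_throwT_left: "catchT (throwT e) h = h e"
  by (simp add: catchT_eq_flipT_bindT throwT_eq_flipT_returnT bindT_returnT_left)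

lemma catchT_throwT_right: "catchT p throwT = p"
proof -
  have flipT_throwT: "flipT \<circ> throwT = returnT"
    by (simp add: fun_eq_iff throwT_eq_flipT_returnT)
  show ?thesis
    by (simp only: catchT_eq_flipT_bindT flipT_throwT bindT_returnT_right flipT_flipT)
qed

lemma catchT_assoc: "catchT (catchT p g) h = catchT p (\<lambda>x. catchT (g x) h)"
  by (simp add: catchT_eq_flipT_bindT bindT_assoc comp_def)

lemma catchT_returnT: "catchT (returnT x) f = returnT x"
proof -
  have "flipT (returnT x) = throwT x"
    by (metis flipT_flipT throwT_eq_flipT_returnT)
  then show ?thesis
    by (metis catchT_eq_flipT_bindT bindT_throwT flipT_flipT)
qed

theorem theorem8:
  fixes dummy :: 'R
  shows
  \<comment> \<open>(returnT, bindT): monad laws in the value index, for every fixed error index\<close>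
    "(\<forall>(x::'a) (k::'a \<Rightarrow> ('R,'e,'b) throwT). bindT (returnT x) k = k x)
   \<and> (\<forall>p::('R,'e,'a) throwT. bindT p returnT = p)
   \<and> (\<forall>(p::('R,'e,'a) throwT) (f::'a \<Rightarrow> ('R,'e,'b) throwT) (g::'b \<Rightarrow> ('R,'e,'c) throwT).
        bindT (bindT p f) g = bindT p (\<lambda>x. bindT (f x) g))
   \<and> (\<forall>(e::'e) (h::'e \<Rightarrow> ('R,'f,'a) throwT). catchT (throwT e) h = h e)
   \<and> (\<forall>p::('R,'e,'a) throwT. catchT p throwT = p)
   \<and> (\<forall>(p::('R,'e,'a) throwT) (g::'e \<Rightarrow> ('R,'f,'a) throwT) (h::'f \<Rightarrow> ('R,'g,'a) throwT).
        catchT (catchT p g) h = catchT p (\<lambda>x. catchT (g x) h))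
   \<and> (\<forall>(x::'a) (f::'e \<Rightarrow> ('R,'f,'a) throwT). catchT (returnT x) f = (returnT x :: ('R,'f,'a) throwT))
   \<and> (\<forall>(e::'e) (f::'a \<Rightarrow> ('R,'e,'b) throwT). bindT (throwT e) f = (throwT e :: ('R,'e,'b) throwT))"
  by (simp add: bindT_returnT_left bindT_returnT_right bindT_assoc
      catchT_throwT_left catchT_throwT_right catchT_assoc catchT_returnT bindT_throwT)

end
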